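(* Let $R$ be a triad hexagon with focal points $A$ (top), $B$ (bottom left), $C$ (bottom right), with bowties of types $(a,a')$ at $A$, $(b,b')$ at $B$, $(c,c')$ at $C$. Define its S-depth, NE-depth and NW-depth to be $$\delta(BC,S)-b-c,\qquad \delta(AC,NE)-a-c,\qquad \delta(AB,NW)-a-b,$$ respectively. Then: (a) $R$ is tileable (admits at least one lozenge tiling) if and only if its S-depth, NE-depth and NW-depth are all non-negative. (b) The S-depth, NE-depth and NW-depth of a triad hexagon are unchanged by any bowtie squeezing operation. (c) If $R$ is tileable, then every triad hexagon obtained from $R$ by a finite sequence of bowtie squeezings is also tileable.
   Context: Work on the triangular lattice, drawn with one family of lattice lines horizontal; unit triangles are up-pointing or down-pointing. A lozenge is the union of two unit triangles sharing an edge. Lengths of lattice segments are measured in unit-triangle side lengths; distances from a point or a segment to a lattice line parallel to it (or to a side of a hexagon) are measured in lattice spacings (the distance between consecutive parallel lattice lines counts as 1). The sides of a lattice hexagon with horizontal top and bottom are called N, NE, SE, S, SW, NW (clockwise from the top); $\delta(P,N)$ denotes the distance from a point or segment $P$ to the line containing the N side, and similarly for the other sides. Triad hexagons. Let $x,y,z,a,b,c,a',b',c'$ be non-negative integers. Let $A,B,C$ be lattice points forming an up-pointing equilateral lattice triangle of side $f$ ($A$ the top vertex, $B$ the bottom-left, $C$ the bottom-right), with $f\ge a'+b'+c'$; $f$ is the focal distance, $A,B,C$ the focal points, $AB,AC,BC$ the focal edges. The $(a,a')$-bowtie at $A$ is the union of the down-pointing lattice triangle of side $a$ with bottom vertex $A$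 and the up-pointing lattice triangle of side $a'$ with top vertex $A$. The $(b,b')$-bowtie at $B$ is the union of the up-pointing triangle of side $b'$ with bottom-left vertex $B$ and the down-pointing triangle of side $b$ with top-right vertex $B$. The $(c,c')$-bowtie at $C$ is the union of the up-pointing triangle of side $c'$ with bottom-right vertex $C$ and the down-pointing triangle of side $c$ with top-left vertex $C$. (Triangles of side $0$ are empty; the lobes of sides $a',b',c'$ are called inner lobes, those of sides $a,b,c$ outer lobes.) Let $H$ be a lattice hexagon with side lengths N: $x+a+b+c$, NE: $y+a'+b'+c'$, SE: $z+a+b+c$, S: $x+a'+b'+c'$, SW: $y+a+b+c$, NW: $z+a'+b'+c'$, containing the three bowties. The triad hexagon $R^{A,B,C}_{x,y,z}(a,b,c,a',b',c')$ is $H$ with the three bowties removed. Bowtie squeezing. Squeezing out the bowtie at $A$ by $d$ units ($0\le d\le a'$): keep $A$ fixed and replace the $(a,a')$-bowtie by an $(a+d,a'-d)$-bowtie; translate the bowtie at $B$ by $d$ units in the direction of $\overrightarrow{BA}$ and the bowtie at $C$ by $d$ units in the direction of $\overrightarrow{CA}$ (so the focal distance becomes $f-d$); translate the N, NW, NE sides of the hexagon outward by $d$ lattice spacings and the S, SW, SE sides inward by $d$ lattice spacings. Squeezing out the bowtie at $B$ by $d\le b'$ is defined symmetrically: $B$ fixed, $(b,b')\to(b+d,b'-d)$, bowties at $A$ and $C$ translated $d$ units in the directions $\overrightarrow{AB}$, $\overrightarrow{CB}$, sides SW, NW, S moved outward and NE, N, SE moved inward by $d$ lattice spacings. Squeezing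 out the bowtie at $C$ by $d\le c'$: $C$ fixed, $(c,c')\to(c+d,c'-d)$, bowties at $A$ and $B$ translated $d$ units in the directions $\overrightarrow{AC}$, $\overrightarrow{BC}$, sides SE, NE, S moved outward and NW, N, SW moved inward by $d$ lattice spacings. Squeezing in a bowtie by $d$ units (with $d$ at most the size of its outer lobe) is the inverse operation. Each of these operations produces again a triad hexagon (with the same $x,y,z$). A bowtie squeezing means any of these operations. *)

theory Defs
  imports Main
begin

text \<open>Lattice points are pairs (i,j) of integers standing for the point i*e1 + j*e2,
  where e1 = (1,0) and e2 = (1/2, sqrt 3/2).  The three families of lattice lines are
  j = const (horizontal), i = const (direction e2) and i+j = const (direction e2-e1);
  consecutive lines of each family are one lattice spacing apart.\<close>

datatype tri = Up int int | Dn int int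

fun tverts :: "tri \<Rightarrow> (int \<times> int) set" where
  "tverts (Up i j) = {(i,j), (i+1,j), (i,j+1)}"
| "tverts (Dn i j) = {(i+1,j), (i,j+1), (i+1,j+1)}"

text \<open>A lozenge: two unit triangles sharing an edge.  The up triangle Up i j shares an
  edge exactly with Dn i j, Dn (i-1) j and Dn i (j-1).\<close>

definition is_lozenge :: "tri set \<Rightarrow> bool" where
  "is_lozenge L \<longleftrightarrow> (\<exists>i j. L = {Up i j, Dn i j} \<or> L = {Up i j, Dn (i-1) j} \<or> L = {Up i j, Dn i (j-1)})"

definition lozenge_tiling :: "tri set set \<Rightarrow> tri set \<Rightarrow> bool" where
  "lozenge_tiling \<L> R \<longleftrightarrow>
     (\<forall>L\<in>\<L>. is_lozenge L) \<and>
     (\<forall>L1\<in>\<L>. \<forall>L2\<in>\<L>. L1 \<noteq> L2 \<longrightarrow> L1 \<inter> L2 = {}) \<and>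
     \<Union>\<L> = R"

definition tileable :: "tri set \<Rightarrow> bool" where
  "tileable R \<longleftrightarrow> (\<exists>\<L>. lozenge_tiling \<L> R)"

definition tris_in :: "(int \<times> int) set \<Rightarrow> tri set" where
  "tris_in P = {t. tverts t \<subseteq> P}"

text \<open>Lattice points of the closed up-pointing triangle of side s with bottom-left vertex (p,q),
  and of the closed down-pointing triangle of side s with top-right vertex (p,q).
  (Side 0 gives a single point, containing no unit triangle.)\<close>
definition up_pts :: "int \<Rightarrow> int \<Rightarrow> nat \<Rightarrow> (int \<times> int) set" where
  "up_pts p q s = {(i,j). p \<le> i \<and> q \<le> j \<and> i + j \<le> p + q + int s}"

definition dn_pts :: "int \<Rightarrow> int \<Rightarrow> nat \<Rightarrow> (int \<times> int) set" where
  "dn_pts p q s = {(i,j). i \<le> p \<and> j \<le> q \<and> p + q - int s \<le> i + j}"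

text \<open>The focal point A is (tpA, tqA); tf is the focal distance, so B = A - tf*e2 and
  C = B + tf*e1.  The hexagon H is
  {(i,j). hi0 \<le> i \<le> hi1, hj0 \<le> j \<le> hj1, hk0 \<le> i+j \<le> hk1}:
  N side on j = hj1, S side on j = hj0, NE side on i+j = hk1, SW side on i+j = hk0,
  SE side on i = hi1, NW side on i = hi0.\<close>

record triad =
  tx :: nat
  ty :: nat
  tz :: nat
  ta :: nat
  tb :: nat
  tc :: nat
  ta' :: nat
  tb' :: nat
  tc' :: nat
  tf :: nat
  tpA :: int
  tqA :: int
  hi0 :: int
  hi1 :: int
  hj0 :: int
  hj1 :: int
  hk0 :: int
  hk1 :: int

definition ptA :: "triad \<Rightarrow> int \<times> int" where
  "ptA T = (tpA T, tqA T)"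
definition ptB :: "triad \<Rightarrow> int \<times> int" where
  "ptB T = (tpA T, tqA T - int (tf T))"
definition ptC :: "triad \<Rightarrow> int \<times> int" where
  "ptC T = (tpA T + int (tf T), tqA T - int (tf T))"

definition hex_pts :: "triad \<Rightarrow> (int \<times> int) set" where
  "hex_pts T = {(i,j). hi0 T \<le> i \<and> i \<le> hi1 T \<and> hj0 T \<le> j \<and> j \<le> hj1 T
                     \<and> hk0 T \<le> i + j \<and> i + j \<le> hk1 T}"

definition lenN :: "triad \<Rightarrow> int" where "lenN T = hk1 T - hj1 T - hi0 T"
definition lenNE :: "triad \<Rightarrow> int" where "lenNE T = hj1 T + hi1 T - hk1 T"
definition lenSE :: "triad \<Rightarrow> int" where "lenSE T = hk1 T - hi1 T - hj0 T"
definition lenS :: "triad \<Rightarrow> int" where "lenS T = hi1 T - hk0 T + hj0 T"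
definition lenSW :: "triad \<Rightarrow> int" where "lenSW T = hk0 T - hi0 T - hj0 T"
definition lenNW :: "triad \<Rightarrow> int" where "lenNW T = hj1 T - hk0 T + hi0 T"

definition lobeA_out :: "triad \<Rightarrow> (int \<times> int) set" where
  "lobeA_out T = dn_pts (tpA T) (tqA T + int (ta T)) (ta T)"   \<comment> \<open>bottom vertex A\<close>
definition lobeA_in :: "triad \<Rightarrow> (int \<times> int) set" where
  "lobeA_in T = up_pts (tpA T) (tqA T - int (ta' T)) (ta' T)"  \<comment> \<open>top vertex A\<close>
definition lobeB_in :: "triad \<Rightarrow> (int \<times> int) set" where
  "lobeB_in T = up_pts (fst (ptB T)) (snd (ptB T)) (tb' T)"     \<comment> \<open>bottom-left vertex B\<close>
definition lobeB_out :: "triad \<Rightarrow> (int \<times> int) set" where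
  "lobeB_out T = dn_pts (fst (ptB T)) (snd (ptB T)) (tb T)"     \<comment> \<open>top-right vertex B\<close>
definition lobeC_in :: "triad \<Rightarrow> (int \<times> int) set" where
  "lobeC_in T = up_pts (fst (ptC T) - int (tc' T)) (snd (ptC T)) (tc' T)"  \<comment> \<open>bottom-right vertex C\<close>
definition lobeC_out :: "triad \<Rightarrow> (int \<times> int) set" where
  "lobeC_out T = dn_pts (fst (ptC T) + int (tc T)) (snd (ptC T)) (tc T)"   \<comment> \<open>top-left vertex C\<close>

definition is_triad :: "triad \<Rightarrow> bool" where
  "is_triad T \<longleftrightarrow>
     ta' T + tb' T + tc' T \<le> tf T \<and>
     lenN T = int (tx T + ta T + tb T + tc T) \<and>
     lenNE T = int (ty T + ta' T + tb' T + tc' T) \<and>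
     lenSE T = int (tz T + ta T + tb T + tc T) \<and>
     lenS T = int (tx T + ta' T + tb' T + tc' T) \<and>
     lenSW T = int (ty T + ta T + tb T + tc T) \<and>
     lenNW T = int (tz T + ta' T + tb' T + tc' T) \<and>
     lobeA_out T \<union> lobeA_in T \<union> lobeB_in T \<union> lobeB_out T \<union> lobeC_in T \<union> lobeC_out T
       \<subseteq> hex_pts T"

definition triad_region :: "triad \<Rightarrow> tri set" where
  "triad_region T = tris_in (hex_pts T) -
     (tris_in (lobeA_out T) \<union> tris_in (lobeA_in T) \<union> tris_in (lobeB_in T) \<union>
      tris_in (lobeB_out T) \<union> tris_in (lobeC_in T) \<union> tris_in (lobeC_out T))"

text \<open>delta(BC,S) = (height of BC) - hj0; delta(AC,NE) = hk1 - (i+j on AC);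
  delta(AB,NW) = (i on AB) - hi0.\<close>
definition S_depth :: "triad \<Rightarrow> int" where
  "S_depth T = (snd (ptB T) - hj0 T) - int (tb T) - int (tc T)"
definition NE_depth :: "triad \<Rightarrow> int" where
  "NE_depth T = (hk1 T - (fst (ptA T) + snd (ptA T))) - int (ta T) - int (tc T)"
definition NW_depth :: "triad \<Rightarrow> int" where
  "NW_depth T = (fst (ptA T) - hi0 T) - int (ta T) - int (tb T)"

definition squeeze_out_A :: "nat \<Rightarrow> triad \<Rightarrow> triad" where
  "squeeze_out_A d T = T\<lparr> ta := ta T + d, ta' := ta' T - d, tf := tf T - d,
      hj1 := hj1 T + int d, hi0 := hi0 T - int d, hk1 := hk1 T + int d,
      hj0 := hj0 T + int d, hk0 := hk0 T + int d, hi1 := hi1 T - int d \<rparr>"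

definition squeeze_out_B :: "nat \<Rightarrow> triad \<Rightarrow> triad" where
  "squeeze_out_B d T = T\<lparr> tb := tb T + d, tb' := tb' T - d, tf := tf T - d,
      tqA := tqA T - int d,
      hk0 := hk0 T - int d, hi0 := hi0 T - int d, hj0 := hj0 T - int d,
      hk1 := hk1 T - int d, hj1 := hj1 T - int d, hi1 := hi1 T - int d \<rparr>"

definition squeeze_out_C :: "nat \<Rightarrow> triad \<Rightarrow> triad" where
  "squeeze_out_C d T = T\<lparr> tc := tc T + d, tc' := tc' T - d, tf := tf T - d,
      tpA := tpA T + int d, tqA := tqA T - int d,
      hi1 := hi1 T + int d, hk1 := hk1 T + int d, hj0 := hj0 T - int d,
      hi0 := hi0 T + int d, hj1 := hj1 T - int d, hk0 := hk0 T + int d \<rparr>"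

definition squeeze_step :: "triad \<Rightarrow> triad \<Rightarrow> bool" where
  "squeeze_step T T' \<longleftrightarrow> is_triad T \<and> is_triad T' \<and>
     (\<exists>d. (d \<le> ta' T \<and> T' = squeeze_out_A d T) \<or>
          (d \<le> tb' T \<and> T' = squeeze_out_B d T) \<or>
          (d \<le> tc' T \<and> T' = squeeze_out_C d T) \<or>
          (d \<le> ta' T' \<and> T = squeeze_out_A d T') \<or>
          (d \<le> tb' T' \<and> T = squeeze_out_B d T') \<or>
          (d \<le> tc' T' \<and> T = squeeze_out_C d T'))"

end

theory Submission
  imports Defs
begin

(* Necessity is a counting argument. If, say, the S-depth is negative, then below the line BC
   there are more up than down triangles: an explicit injection from the down triangles there
   into the up triangles misses one up triangle. Since every lozenge containing an up triangle
   below BC lies below BC, a tiling would pair those up triangles injectively with down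
   triangles below BC, which is impossible.

   Sufficiency is by induction on the slack (p + q - x) + (p + r - y) + (q + r - z), where
   p, q, r are the NW-, NE- and S-depths; it is non-negative when the depths are. While the
   slack is positive, a strip of width one along the two sides at a suitable corner of the
   hexagon can be cut off; the strip is tiled by parallel lozenges, and what remains is a triad
   hexagon with non-negative depths and slack one less. Without slack the region has an
   explicit tiling.

   Bowtie squeezings preserve the depths by direct computation, so (c) follows from (a) and (b). *)

declare [[smt_timeout = 300]]

section \<open>Lozenge tilings and matchings\<close>

(* The down triangle across the bottom (d = 0), left (d = 1) or right (d = 2) edge of Up i j. *)
definition dn_neighbour :: "int \<Rightarrow> int \<Rightarrow> int \<Rightarrow> tri" where
  "dn_neighbour d i j = (if d = 0 then Dn i (j-1) else if d = 1 then Dn (i-1) j else Dn i j)"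

lemma is_lozenge_Up_dn_neighbour: "is_lozenge {Up i j, dn_neighbour d i j}"
  unfolding is_lozenge_def dn_neighbour_def by auto

lemma tileable_if_matching:
  fixes R :: "tri set" and dir :: "int \<Rightarrow> int \<Rightarrow> int"
  assumes dir_range: "\<And>i j. Up i j \<in> R \<Longrightarrow> dir i j = 0 \<or> dir i j = 1 \<or> dir i j = 2"
  and dir_inside: "\<And>i j. Up i j \<in> R \<Longrightarrow> dn_neighbour (dir i j) i j \<in> R"
  and claimed_at_most_once:
    "\<And>i j. \<not> ((Up i j \<in> R \<and> dir i j = 2) \<and> (Up (i+1) j \<in> R \<and> dir (i+1) j = 1))"
    "\<And>i j. \<not> ((Up i j \<in> R \<and> dir i j = 2) \<and> (Up i (j+1) \<in> R \<and> dir i (j+1) = 0))"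
    "\<And>i j. \<not> ((Up (i+1) j \<in> R \<and> dir (i+1) j = 1) \<and> (Up i (j+1) \<in> R \<and> dir i (j+1) = 0))"
  and claimed_at_least_once: "\<And>i j. Dn i j \<in> R \<Longrightarrow>
    (Up i j \<in> R \<and> dir i j = 2) \<or> (Up (i+1) j \<in> R \<and> dir (i+1) j = 1) \<or> (Up i (j+1) \<in> R \<and> dir i (j+1) = 0)"
  shows "tileable R"
proof -
  let ?mate = "\<lambda>i j. dn_neighbour (dir i j) i j"
  define \<L> where "\<L> = (\<lambda>(i,j). {Up i j, ?mate i j}) ` {(i,j). Up i j \<in> R}"
  have mate_inj: "(i, j) = (i', j')"
    if "Up i j \<in> R" "Up i' j' \<in> R" "?mate i j = ?mate i' j'" for i j i' j'
    using that dir_range[OF that(1)] dir_range[OF that(2)]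
      claimed_at_most_once[of i j] claimed_at_most_once[of "i-1" j] claimed_at_most_once[of i "j-1"]
      claimed_at_most_once[of "i'-1" j'] claimed_at_most_once[of i' "j'-1"] claimed_at_most_once[of "i-1" "j-1"]
    by (auto simp: dn_neighbour_def split: if_splits)
  have "lozenge_tiling \<L> R"
    unfolding lozenge_tiling_def
  proof (intro conjI ballI impI)
    fix L assume "L \<in> \<L>"
    then show "is_lozenge L" by (auto simp: \<L>_def is_lozenge_Up_dn_neighbour)
  next
    fix L1 L2 assume "L1 \<in> \<L>" "L2 \<in> \<L>" "L1 \<noteq> L2"
    then obtain i j i' j' where
      L1: "L1 = {Up i j, ?mate i j}" "Up i j \<in> R" and
      L2: "L2 = {Up i' j', ?mate i' j'}" "Up i' j' \<in> R" and "(i, j) \<noteq> (i', j')"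
      by (auto simp: \<L>_def)
    then have "?mate i j \<noteq> ?mate i' j'" using mate_inj by blast
    moreover have "Up i j \<noteq> ?mate i' j'" "Up i' j' \<noteq> ?mate i j" by (auto simp: dn_neighbour_def)
    ultimately show "L1 \<inter> L2 = {}" using L1 L2 \<open>(i, j) \<noteq> (i', j')\<close> by auto
  next
    have "Dn i j \<in> \<Union>\<L>" if "Dn i j \<in> R" for i j
      using claimed_at_least_once[OF that] by (force simp: \<L>_def dn_neighbour_def)
    moreover have "Up i j \<in> \<Union>\<L>" if "Up i j \<in> R" for i j
      using that by (auto simp: \<L>_def)
    ultimately have "R \<subseteq> \<Union>\<L>" by (metis subsetI tri.exhaust)
    moreover have "\<Union>\<L> \<subseteq> R" using dir_inside by (auto simp: \<L>_def)
    ultimately show "\<Union>\<L> = R" by blast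
  qed
  then show ?thesis unfolding tileable_def by blast
qed

lemma tileable_Un:
  assumes "tileable R1" "tileable R2" "R1 \<inter> R2 = {}"
  shows "tileable (R1 \<union> R2)"
proof -
  obtain \<L>1 \<L>2 where t1: "lozenge_tiling \<L>1 R1" and t2: "lozenge_tiling \<L>2 R2"
    using assms(1,2) unfolding tileable_def by blast
  have "L1 \<inter> L2 = {}" if "L1 \<in> \<L>1" "L2 \<in> \<L>2" for L1 L2
    using that t1 t2 assms(3) unfolding lozenge_tiling_def by blast
  then have "lozenge_tiling (\<L>1 \<union> \<L>2) (R1 \<union> R2)"
    using t1 t2 unfolding lozenge_tiling_def by (metis Un_iff Union_Un_distrib inf_commute)
  then show ?thesis unfolding tileable_def by blast
qed

lemma tileable_if_tileable_Diff:
  assumes "tileable R'" "R' \<subseteq> R" "tileable (R - R')"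
  shows "tileable R"
  using tileable_Un[OF assms(1,3)] assms(2) by (simp add: Un_Diff_cancel2 sup.absorb2)

lemma lozenge_containing_Up:
  assumes "is_lozenge L" "Up i j \<in> L"
  shows "\<exists>d \<in> {0, 1, 2}. L = {Up i j, dn_neighbour d i j}"
  using assms unfolding is_lozenge_def dn_neighbour_def by force

lemma Up_in_tiling_lozenge:
  assumes "lozenge_tiling \<L> R" "Up i j \<in> R"
  obtains d where "d \<in> {0, 1, 2}" "{Up i j, dn_neighbour d i j} \<in> \<L>"
proof -
  obtain L where "L \<in> \<L>" "Up i j \<in> L" using assms by (auto simp: lozenge_tiling_def)
  moreover have "is_lozenge L" using assms(1) \<open>L \<in> \<L>\<close> by (simp add: lozenge_tiling_def)
  ultimately show ?thesis using lozenge_containing_Up that by metis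
qed

lemma card_le_if_matched_by_tiling:
  assumes "lozenge_tiling \<L> R" "finite V" "U \<inter> V = {}"
    and matched: "\<And>u. u \<in> U \<Longrightarrow> \<exists>v \<in> V. {u, v} \<in> \<L>"
  shows "card U \<le> card V"
proof -
  obtain g where g: "\<And>u. u \<in> U \<Longrightarrow> g u \<in> V \<and> {u, g u} \<in> \<L>" using matched by metis
  have disjoint: "L1 \<inter> L2 = {}" if "L1 \<in> \<L>" "L2 \<in> \<L>" "L1 \<noteq> L2" for L1 L2
    using assms(1) that by (simp add: lozenge_tiling_def)
  have "inj_on g U"
  proof (rule inj_onI)
    fix u u' assume u: "u \<in> U" "u' \<in> U" "g u = g u'"
    then have "{u, g u} \<inter> {u', g u'} \<noteq> {}" by auto
    then have "{u, g u} = {u', g u'}" using disjoint g[OF u(1)] g[OF u(2)] by blast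
    moreover have "u' \<noteq> g u" using u(2) g[OF u(1)] assms(3) by blast
    ultimately show "u = u'" by (metis doubleton_eq_iff)
  qed
  then show ?thesis using g assms(2) by (metis card_inj_on_le image_subsetI)
qed

lemma up_surplus_not_tileable:
  fixes R :: "tri set" and PU PD :: "int \<Rightarrow> int \<Rightarrow> bool"
    and up_i up_j :: "int \<Rightarrow> int \<Rightarrow> int"
  assumes "finite R"
  and closed: "\<And>i j. Up i j \<in> R \<Longrightarrow> PU i j \<Longrightarrow>
      (Dn i j \<in> R \<longrightarrow> PD i j) \<and> (Dn (i-1) j \<in> R \<longrightarrow> PD (i-1) j) \<and>
      (Dn i (j-1) \<in> R \<longrightarrow> PD i (j-1))"
  and maps_into: "\<And>i j. Dn i j \<in> R \<Longrightarrow> PD i j \<Longrightarrow>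
      Up (up_i i j) (up_j i j) \<in> R \<and> PU (up_i i j) (up_j i j)"
  and inj: "\<And>i j i' j'. Dn i j \<in> R \<Longrightarrow> PD i j \<Longrightarrow> Dn i' j' \<in> R \<Longrightarrow> PD i' j' \<Longrightarrow>
      up_i i j = up_i i' j' \<Longrightarrow> up_j i j = up_j i' j' \<Longrightarrow> i = i' \<and> j = j'"
  and missed: "Up m_i m_j \<in> R" "PU m_i m_j"
    "\<And>i j. Dn i j \<in> R \<Longrightarrow> PD i j \<Longrightarrow> \<not> (up_i i j = m_i \<and> up_j i j = m_j)"
  shows "\<not> tileable R"
proof
  assume "tileable R"
  then obtain \<L> where \<L>: "lozenge_tiling \<L> R" unfolding tileable_def by blast
  define U where "U = {Up i j | i j. Up i j \<in> R \<and> PU i j}"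
  define V where "V = {Dn i j | i j. Dn i j \<in> R \<and> PD i j}"
  have "finite U" "finite V" using \<open>finite R\<close> by (auto simp: U_def V_def intro: rev_finite_subset)
  have "card U \<le> card V"
  proof (rule card_le_if_matched_by_tiling[OF \<L> \<open>finite V\<close>])
    show "U \<inter> V = {}" by (auto simp: U_def V_def)
    fix u assume "u \<in> U"
    then obtain i j where u: "u = Up i j" "Up i j \<in> R" "PU i j" by (auto simp: U_def)
    then obtain d where d: "d \<in> {0, 1, 2}" "{u, dn_neighbour d i j} \<in> \<L>"
      using Up_in_tiling_lozenge[OF \<L>] by metis
    then have "dn_neighbour d i j \<in> R" using \<L> by (auto simp: lozenge_tiling_def)
    then have "dn_neighbour d i j \<in> V"
      using d(1) closed[OF u(2,3)] by (elim insertE emptyE) (simp_all add: V_def dn_neighbour_def)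
    with d(2) show "\<exists>v \<in> V. {u, v} \<in> \<L>" by blast
  qed
  moreover have "card V < card U"
  proof -
    define h where "h t = (case t of Dn i j \<Rightarrow> Up (up_i i j) (up_j i j) | Up i j \<Rightarrow> Up i j)" for t
    have "inj_on h V" using inj by (auto simp: inj_on_def V_def h_def)
    moreover have "h ` V \<subseteq> U - {Up m_i m_j}"
    proof
      fix t assume "t \<in> h ` V"
      then obtain i j where "t = Up (up_i i j) (up_j i j)" "Dn i j \<in> R" "PD i j"
        by (auto simp: V_def h_def)
      then show "t \<in> U - {Up m_i m_j}" using maps_into[of i j] missed(3)[of i j] by (auto simp: U_def)
    qed
    ultimately have "card V \<le> card (U - {Up m_i m_j})" by (metis card_inj_on_le finite_Diff \<open>finite U\<close>)
    also have "\<dots> < card U"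
      using missed(1,2) \<open>finite U\<close> by (intro card_Diff1_less) (auto simp: U_def)
    finally show ?thesis .
  qed
  ultimately show False by simp
qed


section \<open>Triad regions by linear constraints\<close>

definition in_hex :: "triad \<Rightarrow> int \<Rightarrow> int \<Rightarrow> bool" where
  "in_hex T i j \<longleftrightarrow>
     hi0 T \<le> i \<and> i \<le> hi1 T \<and> hj0 T \<le> j \<and> j \<le> hj1 T \<and> hk0 T \<le> i + j \<and> i + j \<le> hk1 T"

lemma mem_hex_pts_iff: "(i, j) \<in> hex_pts T \<longleftrightarrow> in_hex T i j"
  by (simp add: hex_pts_def in_hex_def)

(* Lobes and hexagon are convex, so the bowties lie in the hexagon as soon as the vertices of
   their lobes do. *)

definition triad_linear :: "triad \<Rightarrow> bool" where
 "triad_linear T \<longleftrightarrow> int (ta' T) + int (tb' T) + int (tc' T) \<le> int (tf T) \<and>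
     hk1 T - hj1 T - hi0 T = int (tx T) + int (ta T) + int (tb T) + int (tc T) \<and>
     hj1 T + hi1 T - hk1 T = int (ty T) + int (ta' T) + int (tb' T) + int (tc' T) \<and>
     hk1 T - hi1 T - hj0 T = int (tz T) + int (ta T) + int (tb T) + int (tc T) \<and>
     hi1 T - hk0 T + hj0 T = int (tx T) + int (ta' T) + int (tb' T) + int (tc' T) \<and>
     hk0 T - hi0 T - hj0 T = int (ty T) + int (ta T) + int (tb T) + int (tc T) \<and>
     hj1 T - hk0 T + hi0 T = int (tz T) + int (ta' T) + int (tb' T) + int (tc' T) \<and>
     in_hex T (tpA T) (tqA T + int (ta T)) \<and> in_hex T (tpA T - int (ta T)) (tqA T + int (ta T)) \<and>
     in_hex T (tpA T) (tqA T) \<and>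
     in_hex T (tpA T) (tqA T - int (ta' T)) \<and> in_hex T (tpA T + int (ta' T)) (tqA T - int (ta' T)) \<and>
     in_hex T (tpA T) (tqA T - int (tf T)) \<and> in_hex T (tpA T + int (tb' T)) (tqA T - int (tf T)) \<and>
     in_hex T (tpA T) (tqA T - int (tf T) + int (tb' T)) \<and>
     in_hex T (tpA T - int (tb T)) (tqA T - int (tf T)) \<and> in_hex T (tpA T) (tqA T - int (tf T) - int (tb T)) \<and>
     in_hex T (tpA T + int (tf T) - int (tc' T)) (tqA T - int (tf T)) \<and>
     in_hex T (tpA T + int (tf T)) (tqA T - int (tf T)) \<and>
     in_hex T (tpA T + int (tf T) - int (tc' T)) (tqA T - int (tf T) + int (tc' T)) \<and>
     in_hex T (tpA T + int (tf T) + int (tc T)) (tqA T - int (tf T)) \<and>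
     in_hex T (tpA T + int (tf T) + int (tc T)) (tqA T - int (tf T) - int (tc T))"

lemma up_pts_subset_hex_pts:
  assumes "(p, q) \<in> hex_pts T" "(p + int s, q) \<in> hex_pts T" "(p, q + int s) \<in> hex_pts T"
  shows "up_pts p q s \<subseteq> hex_pts T"
  using assms by (auto simp: up_pts_def hex_pts_def)

lemma dn_pts_subset_hex_pts:
  assumes "(p, q) \<in> hex_pts T" "(p - int s, q) \<in> hex_pts T" "(p, q - int s) \<in> hex_pts T"
  shows "dn_pts p q s \<subseteq> hex_pts T"
  using assms by (auto simp: dn_pts_def hex_pts_def)

lemma is_triad_iff_linear: "is_triad T \<longleftrightarrow> triad_linear T"
proof
  assume T: "is_triad T"
  then have lobes: "p \<in> hex_pts T"
    if "p \<in> lobeA_out T \<union> lobeA_in T \<union> lobeB_in T \<union> lobeB_out T \<union> lobeC_in T \<union> lobeC_out T" for p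
    using that by (auto simp: is_triad_def)
  have "in_hex T (tpA T) (tqA T + int (ta T))" "in_hex T (tpA T - int (ta T)) (tqA T + int (ta T))"
    "in_hex T (tpA T) (tqA T)"
    "in_hex T (tpA T) (tqA T - int (ta' T))" "in_hex T (tpA T + int (ta' T)) (tqA T - int (ta' T))"
    "in_hex T (tpA T) (tqA T - int (tf T))" "in_hex T (tpA T + int (tb' T)) (tqA T - int (tf T))"
    "in_hex T (tpA T) (tqA T - int (tf T) + int (tb' T))"
    "in_hex T (tpA T - int (tb T)) (tqA T - int (tf T))" "in_hex T (tpA T) (tqA T - int (tf T) - int (tb T))"
    "in_hex T (tpA T + int (tf T) - int (tc' T)) (tqA T - int (tf T))"
    "in_hex T (tpA T + int (tf T)) (tqA T - int (tf T))"
    "in_hex T (tpA T + int (tf T) - int (tc' T)) (tqA T - int (tf T) + int (tc' T))"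
    "in_hex T (tpA T + int (tf T) + int (tc T)) (tqA T - int (tf T))"
    "in_hex T (tpA T + int (tf T) + int (tc T)) (tqA T - int (tf T) - int (tc T))"
    unfolding mem_hex_pts_iff[symmetric]
    by (rule lobes, simp add: lobeA_out_def lobeA_in_def lobeB_in_def lobeB_out_def lobeC_in_def
        lobeC_out_def up_pts_def dn_pts_def ptB_def ptC_def)+
  with T show "triad_linear T"
    by (simp add: triad_linear_def is_triad_def lenN_def lenNE_def lenSE_def lenS_def lenSW_def lenNW_def)
next
  assume L: "triad_linear T"
  have "lobeA_out T \<subseteq> hex_pts T" "lobeB_out T \<subseteq> hex_pts T" "lobeC_out T \<subseteq> hex_pts T"
    unfolding lobeA_out_def lobeB_out_def lobeC_out_def using L
    by (intro dn_pts_subset_hex_pts;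
        simp add: triad_linear_def mem_hex_pts_iff ptB_def ptC_def algebra_simps)+
  moreover have "lobeA_in T \<subseteq> hex_pts T" "lobeB_in T \<subseteq> hex_pts T" "lobeC_in T \<subseteq> hex_pts T"
    unfolding lobeA_in_def lobeB_in_def lobeC_in_def using L
    by (intro up_pts_subset_hex_pts;
        simp add: triad_linear_def mem_hex_pts_iff ptB_def ptC_def algebra_simps)+
  ultimately show "is_triad T" using L
    by (simp add: is_triad_def triad_linear_def lenN_def lenNE_def lenSE_def lenS_def lenSW_def lenNW_def)
qed

definition in_up_tri :: "int \<Rightarrow> int \<Rightarrow> int \<Rightarrow> int \<Rightarrow> int \<Rightarrow> bool" where
  "in_up_tri p q s i j \<longleftrightarrow> p \<le> i \<and> q \<le> j \<and> i + j \<le> p + q + s"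

definition in_dn_tri :: "int \<Rightarrow> int \<Rightarrow> int \<Rightarrow> int \<Rightarrow> int \<Rightarrow> bool" where
  "in_dn_tri p q s i j \<longleftrightarrow> i \<le> p \<and> j \<le> q \<and> p + q - s \<le> i + j"

lemma mem_up_pts_iff: "(i, j) \<in> up_pts p q s \<longleftrightarrow> in_up_tri p q (int s) i j"
  by (simp add: up_pts_def in_up_tri_def)

lemma mem_dn_pts_iff: "(i, j) \<in> dn_pts p q s \<longleftrightarrow> in_dn_tri p q (int s) i j"
  by (simp add: dn_pts_def in_dn_tri_def)

definition in_common_lobe :: "triad \<Rightarrow> int \<Rightarrow> int \<Rightarrow> int \<Rightarrow> int \<Rightarrow> int \<Rightarrow> int \<Rightarrow> bool" where
  "in_common_lobe T x1 y1 x2 y2 x3 y3 \<longleftrightarrow>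
     (in_dn_tri (tpA T) (tqA T + int (ta T)) (int (ta T)) x1 y1 \<and>
      in_dn_tri (tpA T) (tqA T + int (ta T)) (int (ta T)) x2 y2 \<and>
      in_dn_tri (tpA T) (tqA T + int (ta T)) (int (ta T)) x3 y3) \<or>
     (in_up_tri (tpA T) (tqA T - int (ta' T)) (int (ta' T)) x1 y1 \<and>
      in_up_tri (tpA T) (tqA T - int (ta' T)) (int (ta' T)) x2 y2 \<and>
      in_up_tri (tpA T) (tqA T - int (ta' T)) (int (ta' T)) x3 y3) \<or>
     (in_up_tri (tpA T) (tqA T - int (tf T)) (int (tb' T)) x1 y1 \<and>
      in_up_tri (tpA T) (tqA T - int (tf T)) (int (tb' T)) x2 y2 \<and>
      in_up_tri (tpA T) (tqA T - int (tf T)) (int (tb' T)) x3 y3) \<or>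
     (in_dn_tri (tpA T) (tqA T - int (tf T)) (int (tb T)) x1 y1 \<and>
      in_dn_tri (tpA T) (tqA T - int (tf T)) (int (tb T)) x2 y2 \<and>
      in_dn_tri (tpA T) (tqA T - int (tf T)) (int (tb T)) x3 y3) \<or>
     (in_up_tri (tpA T + int (tf T) - int (tc' T)) (tqA T - int (tf T)) (int (tc' T)) x1 y1 \<and>
      in_up_tri (tpA T + int (tf T) - int (tc' T)) (tqA T - int (tf T)) (int (tc' T)) x2 y2 \<and>
      in_up_tri (tpA T + int (tf T) - int (tc' T)) (tqA T - int (tf T)) (int (tc' T)) x3 y3) \<or>
     (in_dn_tri (tpA T + int (tf T) + int (tc T)) (tqA T - int (tf T)) (int (tc T)) x1 y1 \<and>
      in_dn_tri (tpA T + int (tf T) + int (tc T)) (tqA T - int (tf T)) (int (tc T)) x2 y2 \<and>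
      in_dn_tri (tpA T + int (tf T) + int (tc T)) (tqA T - int (tf T)) (int (tc T)) x3 y3)"

lemma Up_in_triad_region_iff:
  "Up i j \<in> triad_region T \<longleftrightarrow> in_hex T i j \<and> in_hex T (i+1) j \<and> in_hex T i (j+1) \<and>
     \<not> in_common_lobe T i j (i+1) j i (j+1)"
  by (simp add: triad_region_def tris_in_def mem_hex_pts_iff in_common_lobe_def lobeA_out_def lobeA_in_def
      lobeB_in_def lobeB_out_def lobeC_in_def lobeC_out_def mem_up_pts_iff mem_dn_pts_iff ptB_def ptC_def)

lemma Dn_in_triad_region_iff:
  "Dn i j \<in> triad_region T \<longleftrightarrow> in_hex T (i+1) j \<and> in_hex T i (j+1) \<and> in_hex T (i+1) (j+1) \<and>
     \<not> in_common_lobe T (i+1) j i (j+1) (i+1) (j+1)"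
  by (simp add: triad_region_def tris_in_def mem_hex_pts_iff in_common_lobe_def lobeA_out_def lobeA_in_def
      lobeB_in_def lobeB_out_def lobeC_in_def lobeC_out_def mem_up_pts_iff mem_dn_pts_iff ptB_def ptC_def)

lemma finite_triad_region: "finite (triad_region T)"
proof -
  let ?B = "{hi0 T - 1..hi1 T} \<times> {hj0 T..hj1 T}"
  have "triad_region T \<subseteq> case_prod Up ` ?B \<union> case_prod Dn ` ?B"
  proof
    fix t assume t: "t \<in> triad_region T"
    show "t \<in> case_prod Up ` ?B \<union> case_prod Dn ` ?B"
    proof (cases t)
      case (Up i j)
      then have "(i, j) \<in> ?B" using t by (simp add: Up_in_triad_region_iff in_hex_def)
      then show ?thesis using Up by force
    next
      case (Dn i j)
      then have "(i, j) \<in> ?B" using t by (simp add: Dn_in_triad_region_iff in_hex_def)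
      then show ?thesis using Dn by force
    qed
  qed
  then show ?thesis by (rule finite_subset) simp
qed

lemma triad_fields_nonneg:
  "0 \<le> int (tx T) \<and> 0 \<le> int (ty T) \<and> 0 \<le> int (tz T) \<and> 0 \<le> int (ta T) \<and> 0 \<le> int (tb T) \<and>
   0 \<le> int (tc T) \<and> 0 \<le> int (ta' T) \<and> 0 \<le> int (tb' T) \<and> 0 \<le> int (tc' T) \<and> 0 \<le> int (tf T)"
  by simp

lemmas triad_arith_defs = triad_linear_def in_hex_def in_common_lobe_def in_up_tri_def in_dn_tri_def
  S_depth_def NE_depth_def NW_depth_def ptA_def ptB_def fst_conv snd_conv

section \<open>Negative depths obstruct tilings\<close>

(* If the S-depth is negative: each down triangle below BC is sent to the up triangle above
   it, except in the row just below BC, whose down triangles (which skip the outer lobes at B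
   and C) go to the bottom row; the rightmost up triangle of the bottom row is missed. *)

definition S_inj_i :: "triad \<Rightarrow> int \<Rightarrow> int \<Rightarrow> int" where
  "S_inj_i T i j = (if j < tqA T - int (tf T) - 1 then i else
     i + (tqA T - int (tf T) - hj0 T) - (if tpA T \<le> i then int (tb T) else 0)
       - (if tpA T + int (tf T) + int (tc T) \<le> i then int (tc T) else 0))"

definition S_inj_j :: "triad \<Rightarrow> int \<Rightarrow> int \<Rightarrow> int" where
  "S_inj_j T i j = (if j < tqA T - int (tf T) - 1 then j + 1 else hj0 T)"

lemma S_inj_maps_into:
  assumes "triad_linear T" "S_depth T < 0" "Dn i j \<in> triad_region T" "j < tqA T - int (tf T)"
  shows "Up (S_inj_i T i j) (S_inj_j T i j) \<in> triad_region T \<and> S_inj_j T i j < tqA T - int (tf T)"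
  using assms triad_fields_nonneg[of T] unfolding S_inj_i_def S_inj_j_def
  by (cases "j < tqA T - int (tf T) - 1"; cases "tpA T \<le> i"; cases "tpA T + int (tf T) + int (tc T) \<le> i";
      simp only: Up_in_triad_region_iff Dn_in_triad_region_iff if_True if_False;
      unfold triad_arith_defs; smt (z3))

lemma S_inj_misses:
  assumes "triad_linear T" "S_depth T < 0" "Dn i j \<in> triad_region T" "j < tqA T - int (tf T)"
  shows "\<not> (S_inj_i T i j = hi1 T - 1 \<and> S_inj_j T i j = hj0 T)"
  using assms triad_fields_nonneg[of T] unfolding S_inj_i_def S_inj_j_def
  by (cases "j < tqA T - int (tf T) - 1"; cases "tpA T \<le> i"; cases "tpA T + int (tf T) + int (tc T) \<le> i";
      simp only: Up_in_triad_region_iff Dn_in_triad_region_iff if_True if_False;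
      unfold triad_arith_defs; smt (z3))

lemma S_inj_missed_in_region:
  assumes "triad_linear T" "S_depth T < 0"
  shows "Up (hi1 T - 1) (hj0 T) \<in> triad_region T \<and> hj0 T < tqA T - int (tf T)"
  using assms triad_fields_nonneg[of T]
  by (simp only: Up_in_triad_region_iff Dn_in_triad_region_iff; unfold triad_arith_defs; smt (z3))

lemma S_inj_injective:
  assumes "triad_linear T" "S_depth T < 0"
    and "Dn i j \<in> triad_region T" "j < tqA T - int (tf T)"
    and "Dn i' j' \<in> triad_region T" "j' < tqA T - int (tf T)"
    and "S_inj_i T i j = S_inj_i T i' j'" "S_inj_j T i j = S_inj_j T i' j'"
  shows "i = i' \<and> j = j'"
proof -
  note facts = assms triad_fields_nonneg[of T]
  note simps = Up_in_triad_region_iff Dn_in_triad_region_iff if_True if_False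
  let ?top = "tqA T - int (tf T) - 1"
  consider "j < ?top" "j' < ?top" | "j < ?top" "\<not> j' < ?top" | "\<not> j < ?top" "j' < ?top"
    | "\<not> j < ?top" "\<not> j' < ?top" by blast
  then show ?thesis
  proof cases
    case 4
    then show ?thesis using facts unfolding S_inj_i_def S_inj_j_def
      by (cases "tpA T \<le> i"; cases "tpA T + int (tf T) + int (tc T) \<le> i";
          cases "tpA T \<le> i'"; cases "tpA T + int (tf T) + int (tc T) \<le> i'";
          simp only: simps; unfold triad_arith_defs; smt (z3))
  qed (use facts in \<open>simp only: S_inj_i_def S_inj_j_def simps; unfold triad_arith_defs; smt (z3)\<close>)+
qed

lemma S_depth_nonneg_if_tileable:
  assumes "triad_linear T" "tileable (triad_region T)"
  shows "0 \<le> S_depth T"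
proof (rule ccontr)
  assume "\<not> 0 \<le> S_depth T"
  then have neg: "S_depth T < 0" by simp
  have "\<not> tileable (triad_region T)"
    by (rule up_surplus_not_tileable[where PU = "\<lambda>i j. j < tqA T - int (tf T)"
          and PD = "\<lambda>i j. j < tqA T - int (tf T)",
        OF finite_triad_region _
        S_inj_maps_into[OF assms(1) neg] S_inj_injective[OF assms(1) neg]
        S_inj_missed_in_region[OF assms(1) neg, THEN conjunct1]
        S_inj_missed_in_region[OF assms(1) neg, THEN conjunct2]
        S_inj_misses[OF assms(1) neg]]) simp
  with assms(2) show False by contradiction
qed

(* If the NW-depth is negative: each down triangle left of AB is sent to the up triangle on
   its right, except in the column next to AB, whose down triangles (which skip the outer
   lobes at A and B) go to the NW side. *)

definition NW_inj_i :: "triad \<Rightarrow> int \<Rightarrow> int \<Rightarrow> int" where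
  "NW_inj_i T i j = (if i < tpA T - 1 then i + 1 else hi0 T)"

definition NW_inj_j :: "triad \<Rightarrow> int \<Rightarrow> int \<Rightarrow> int" where
  "NW_inj_j T i j = (if i < tpA T - 1 then j else
     j + (if j < tqA T then int (ta T) else 0) + (if j < tqA T - int (tf T) - int (tb T) then int (tb T) else 0))"

lemma NW_inj_maps_into:
  assumes "triad_linear T" "NW_depth T < 0" "Dn i j \<in> triad_region T" "i + 1 \<le> tpA T"
  shows "Up (NW_inj_i T i j) (NW_inj_j T i j) \<in> triad_region T \<and> NW_inj_i T i j + 1 \<le> tpA T"
  using assms triad_fields_nonneg[of T] unfolding NW_inj_i_def NW_inj_j_def
  by (cases "i < tpA T - 1"; cases "j < tqA T"; cases "j < tqA T - int (tf T) - int (tb T)";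
      simp only: Up_in_triad_region_iff Dn_in_triad_region_iff if_True if_False;
      unfold triad_arith_defs; smt (z3))

lemma NW_inj_misses:
  assumes "triad_linear T" "NW_depth T < 0" "Dn i j \<in> triad_region T" "i + 1 \<le> tpA T"
  shows "\<not> (NW_inj_i T i j = hi0 T \<and> NW_inj_j T i j = hk0 T - hi0 T)"
  using assms triad_fields_nonneg[of T] unfolding NW_inj_i_def NW_inj_j_def
  by (cases "i < tpA T - 1"; cases "j < tqA T"; cases "j < tqA T - int (tf T) - int (tb T)";
      simp only: Up_in_triad_region_iff Dn_in_triad_region_iff if_True if_False;
      unfold triad_arith_defs; smt (z3))

lemma NW_inj_missed_in_region:
  assumes "triad_linear T" "NW_depth T < 0"
  shows "Up (hi0 T) (hk0 T - hi0 T) \<in> triad_region T \<and> hi0 T + 1 \<le> tpA T"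
  using assms triad_fields_nonneg[of T]
  by (simp only: Up_in_triad_region_iff Dn_in_triad_region_iff; unfold triad_arith_defs; smt (z3))

lemma NW_inj_injective:
  assumes "triad_linear T" "NW_depth T < 0"
    and "Dn i j \<in> triad_region T" "i + 1 \<le> tpA T"
    and "Dn i' j' \<in> triad_region T" "i' + 1 \<le> tpA T"
    and "NW_inj_i T i j = NW_inj_i T i' j'" "NW_inj_j T i j = NW_inj_j T i' j'"
  shows "i = i' \<and> j = j'"
proof -
  note facts = assms triad_fields_nonneg[of T]
  note simps = Up_in_triad_region_iff Dn_in_triad_region_iff if_True if_False
  let ?last = "tpA T - 1"
  consider "i < ?last" "i' < ?last" | "i < ?last" "\<not> i' < ?last" | "\<not> i < ?last" "i' < ?last"
    | "\<not> i < ?last" "\<not> i' < ?last" by blast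
  then show ?thesis
  proof cases
    case 4
    then show ?thesis using facts unfolding NW_inj_i_def NW_inj_j_def
      by (cases "j < tqA T"; cases "j < tqA T - int (tf T) - int (tb T)";
          cases "j' < tqA T"; cases "j' < tqA T - int (tf T) - int (tb T)";
          simp only: simps; unfold triad_arith_defs; smt (z3))
  qed (use facts in \<open>simp only: NW_inj_i_def NW_inj_j_def simps; unfold triad_arith_defs; smt (z3)\<close>)+
qed

lemma NW_depth_nonneg_if_tileable:
  assumes "triad_linear T" "tileable (triad_region T)"
  shows "0 \<le> NW_depth T"
proof (rule ccontr)
  assume "\<not> 0 \<le> NW_depth T"
  then have neg: "NW_depth T < 0" by simp
  have "\<not> tileable (triad_region T)"
    by (rule up_surplus_not_tileable[where PU = "\<lambda>i j. i + 1 \<le> tpA T"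
          and PD = "\<lambda>i j. i + 1 \<le> tpA T",
        OF finite_triad_region _
        NW_inj_maps_into[OF assms(1) neg] NW_inj_injective[OF assms(1) neg]
        NW_inj_missed_in_region[OF assms(1) neg, THEN conjunct1]
        NW_inj_missed_in_region[OF assms(1) neg, THEN conjunct2]
        NW_inj_misses[OF assms(1) neg]]) simp
  with assms(2) show False by contradiction
qed

(* If the NE-depth is negative: each down triangle right of AC is sent to the up triangle
   across its left edge, except along AC, where the down triangles (which skip the outer lobes
   at A and C) go to the NE side. *)

definition NE_row_shift :: "triad \<Rightarrow> int \<Rightarrow> int" where
  "NE_row_shift T j = j + hk1 T - (tpA T + tqA T) - (if tqA T - int (tf T) \<le> j then int (tc T) else 0)
     - (if tqA T + int (ta T) \<le> j then int (ta T) else 0)"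

definition NE_inj_i :: "triad \<Rightarrow> int \<Rightarrow> int \<Rightarrow> int" where
  "NE_inj_i T i j = (if tpA T + tqA T < i + j + 1 then i else hk1 T - 1 - NE_row_shift T j)"

definition NE_inj_j :: "triad \<Rightarrow> int \<Rightarrow> int \<Rightarrow> int" where
  "NE_inj_j T i j = (if tpA T + tqA T < i + j + 1 then j else NE_row_shift T j)"

lemma NE_inj_maps_into:
  assumes "triad_linear T" "NE_depth T < 0" "Dn i j \<in> triad_region T" "tpA T + tqA T \<le> i + j + 1"
  shows "Up (NE_inj_i T i j) (NE_inj_j T i j) \<in> triad_region T \<and> tpA T + tqA T \<le> NE_inj_i T i j + NE_inj_j T i j"
  using assms triad_fields_nonneg[of T] unfolding NE_inj_i_def NE_inj_j_def NE_row_shift_def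
  by (cases "tpA T + tqA T < i + j + 1"; cases "tqA T - int (tf T) \<le> j"; cases "tqA T + int (ta T) \<le> j";
      simp only: Up_in_triad_region_iff Dn_in_triad_region_iff if_True if_False;
      unfold triad_arith_defs; smt (z3))

lemma NE_inj_misses:
  assumes "triad_linear T" "NE_depth T < 0" "Dn i j \<in> triad_region T" "tpA T + tqA T \<le> i + j + 1"
  shows "\<not> (NE_inj_i T i j = hk1 T - hj1 T \<and> NE_inj_j T i j = hj1 T - 1)"
  using assms triad_fields_nonneg[of T] unfolding NE_inj_i_def NE_inj_j_def NE_row_shift_def
  by (cases "tpA T + tqA T < i + j + 1"; cases "tqA T - int (tf T) \<le> j"; cases "tqA T + int (ta T) \<le> j";
      simp only: Up_in_triad_region_iff Dn_in_triad_region_iff if_True if_False;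
      unfold triad_arith_defs; smt (z3))

lemma NE_inj_missed_in_region:
  assumes "triad_linear T" "NE_depth T < 0"
  shows "Up (hk1 T - hj1 T) (hj1 T - 1) \<in> triad_region T \<and> tpA T + tqA T \<le> (hk1 T - hj1 T) + (hj1 T - 1)"
  using assms triad_fields_nonneg[of T]
  by (simp only: Up_in_triad_region_iff Dn_in_triad_region_iff; unfold triad_arith_defs; smt (z3))

lemma NE_inj_injective:
  assumes "triad_linear T" "NE_depth T < 0"
    and "Dn i j \<in> triad_region T" "tpA T + tqA T \<le> i + j + 1"
    and "Dn i' j' \<in> triad_region T" "tpA T + tqA T \<le> i' + j' + 1"
    and "NE_inj_i T i j = NE_inj_i T i' j'" "NE_inj_j T i j = NE_inj_j T i' j'"
  shows "i = i' \<and> j = j'"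
proof -
  note facts = assms triad_fields_nonneg[of T]
  note simps = Up_in_triad_region_iff Dn_in_triad_region_iff if_True if_False
  let ?A = "tpA T + tqA T"
  consider "?A < i + j + 1" "?A < i' + j' + 1" | "?A < i + j + 1" "\<not> ?A < i' + j' + 1"
    | "\<not> ?A < i + j + 1" "?A < i' + j' + 1" | "\<not> ?A < i + j + 1" "\<not> ?A < i' + j' + 1" by blast
  then show ?thesis
  proof cases
    case 4
    then show ?thesis using facts unfolding NE_inj_i_def NE_inj_j_def NE_row_shift_def
      by (cases "tqA T - int (tf T) \<le> j"; cases "tqA T + int (ta T) \<le> j";
          cases "tqA T - int (tf T) \<le> j'"; cases "tqA T + int (ta T) \<le> j'";
          simp only: simps; unfold triad_arith_defs; smt (z3))
  qed (use facts in \<open>simp only: NE_inj_i_def NE_inj_j_def NE_row_shift_def simps;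
        unfold triad_arith_defs; smt (z3)\<close>)+
qed

lemma NE_depth_nonneg_if_tileable:
  assumes "triad_linear T" "tileable (triad_region T)"
  shows "0 \<le> NE_depth T"
proof (rule ccontr)
  assume "\<not> 0 \<le> NE_depth T"
  then have neg: "NE_depth T < 0" by simp
  have "\<not> tileable (triad_region T)"
    by (rule up_surplus_not_tileable[where PU = "\<lambda>i j. tpA T + tqA T \<le> i + j"
          and PD = "\<lambda>i j. tpA T + tqA T \<le> i + j + 1",
        OF finite_triad_region _
        NE_inj_maps_into[OF assms(1) neg] NE_inj_injective[OF assms(1) neg]
        NE_inj_missed_in_region[OF assms(1) neg, THEN conjunct1]
        NE_inj_missed_in_region[OF assms(1) neg, THEN conjunct2]
        NE_inj_misses[OF assms(1) neg]]) simp
  with assms(2) show False by contradiction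
qed

section \<open>Tilings for non-negative depths\<close>

definition slack :: "triad \<Rightarrow> int" where
  "slack T = (NW_depth T + NE_depth T - int (tx T)) + (NW_depth T + S_depth T - int (ty T))
     + (NE_depth T + S_depth T - int (tz T))"

lemma depths_sum:
  assumes "triad_linear T"
  shows "NW_depth T + NE_depth T + S_depth T + (int (tf T) - int (ta' T) - int (tb' T) - int (tc' T))
    = int (tx T) + int (ty T) + int (tz T)"
  using assms unfolding triad_arith_defs by linarith

lemma inner_lobes_le_focal_distance:
  "triad_linear T \<Longrightarrow> int (ta' T) + int (tb' T) + int (tc' T) \<le> int (tf T)"
  by (simp add: triad_linear_def)

lemma sides_le_depth_sums:
  assumes "triad_linear T" "0 \<le> NW_depth T" "0 \<le> NE_depth T" "0 \<le> S_depth T"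
  shows "int (tx T) \<le> NW_depth T + NE_depth T \<and> int (ty T) \<le> NW_depth T + S_depth T \<and>
    int (tz T) \<le> NE_depth T + S_depth T"
  using assms triad_fields_nonneg[of T] unfolding triad_arith_defs by (smt (z3))

datatype hex_corner = W_corner | E_corner | NW_corner | NE_corner | SW_corner | SE_corner

(* Cutting a corner moves the two sides meeting there inward by one lattice spacing. *)

definition cut_corner :: "hex_corner \<Rightarrow> triad \<Rightarrow> triad" where
  "cut_corner c T = T\<lparr>
     tx := tx T - of_bool (c \<in> {W_corner, E_corner}),
     ty := ty T - of_bool (c \<in> {NW_corner, SE_corner}),
     tz := tz T - of_bool (c \<in> {NE_corner, SW_corner}),
     hi0 := hi0 T + of_bool (c \<in> {W_corner, NW_corner}),
     hi1 := hi1 T - of_bool (c \<in> {E_corner, SE_corner}),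
     hj0 := hj0 T + of_bool (c \<in> {SW_corner, SE_corner}),
     hj1 := hj1 T - of_bool (c \<in> {NW_corner, NE_corner}),
     hk0 := hk0 T + of_bool (c \<in> {W_corner, SW_corner}),
     hk1 := hk1 T - of_bool (c \<in> {E_corner, NE_corner})\<rparr>"

fun corner_cuttable :: "hex_corner \<Rightarrow> triad \<Rightarrow> bool" where
  "corner_cuttable W_corner T \<longleftrightarrow> 0 < int (tx T) \<and> 0 < NW_depth T \<and> int (ty T) < NW_depth T + S_depth T"
| "corner_cuttable E_corner T \<longleftrightarrow> 0 < int (tx T) \<and> 0 < NE_depth T \<and> int (tz T) < NE_depth T + S_depth T"
| "corner_cuttable NW_corner T \<longleftrightarrow> 0 < int (ty T) \<and> 0 < NW_depth T \<and> int (tx T) < NW_depth T + NE_depth T"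
| "corner_cuttable SE_corner T \<longleftrightarrow> 0 < int (ty T) \<and> 0 < S_depth T \<and> int (tz T) < NE_depth T + S_depth T"
| "corner_cuttable NE_corner T \<longleftrightarrow> 0 < int (tz T) \<and> 0 < NE_depth T \<and> int (tx T) < NW_depth T + NE_depth T"
| "corner_cuttable SW_corner T \<longleftrightarrow> 0 < int (tz T) \<and> 0 < S_depth T \<and> int (ty T) < NW_depth T + S_depth T"

(* Each arm of the cut-off strip is a row of parallel lozenges. *)

fun corner_dir :: "hex_corner \<Rightarrow> triad \<Rightarrow> int \<Rightarrow> int \<Rightarrow> int" where
  "corner_dir W_corner T i j = (if i = hi0 T then 2 else 1)"
| "corner_dir E_corner T i j = (if i + j + 1 = hk1 T then 1 else 2)"
| "corner_dir NW_corner T i j = (if j = hj1 T - 1 \<and> i \<noteq> hi0 T then 1 else 0)"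
| "corner_dir SE_corner T i j = (if j = hj0 T then 1 else 0)"
| "corner_dir NE_corner T i j = (if i + j + 1 = hk1 T then 0 else 2)"
| "corner_dir SW_corner T i j = (if j = hj0 T then 2 else 0)"

lemma cut_corner_fields:
  "tx (cut_corner c T) = tx T - of_bool (c \<in> {W_corner, E_corner})"
  "ty (cut_corner c T) = ty T - of_bool (c \<in> {NW_corner, SE_corner})"
  "tz (cut_corner c T) = tz T - of_bool (c \<in> {NE_corner, SW_corner})"
  "hi0 (cut_corner c T) = hi0 T + of_bool (c \<in> {W_corner, NW_corner})"
  "hi1 (cut_corner c T) = hi1 T - of_bool (c \<in> {E_corner, SE_corner})"
  "hj0 (cut_corner c T) = hj0 T + of_bool (c \<in> {SW_corner, SE_corner})"
  "hj1 (cut_corner c T) = hj1 T - of_bool (c \<in> {NW_corner, NE_corner})"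
  "hk0 (cut_corner c T) = hk0 T + of_bool (c \<in> {W_corner, SW_corner})"
  "hk1 (cut_corner c T) = hk1 T - of_bool (c \<in> {E_corner, NE_corner})"
  "ta (cut_corner c T) = ta T" "tb (cut_corner c T) = tb T" "tc (cut_corner c T) = tc T"
  "ta' (cut_corner c T) = ta' T" "tb' (cut_corner c T) = tb' T" "tc' (cut_corner c T) = tc' T"
  "tf (cut_corner c T) = tf T" "tpA (cut_corner c T) = tpA T" "tqA (cut_corner c T) = tqA T"
  by (simp_all add: cut_corner_def)

lemmas corner_simps = cut_corner_fields corner_dir.simps insert_iff singleton_iff empty_iff hex_corner.distinct
  of_bool_eq simp_thms add_0_right diff_0_right

lemma cut_corner_linear:
  assumes "triad_linear T" "0 \<le> NW_depth T" "0 \<le> NE_depth T" "0 \<le> S_depth T"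
    and "corner_cuttable c T"
  shows "triad_linear (cut_corner c T) \<and> 0 \<le> NW_depth (cut_corner c T) \<and>
    0 \<le> NE_depth (cut_corner c T) \<and> 0 \<le> S_depth (cut_corner c T) \<and>
    slack (cut_corner c T) + 1 = slack T"
proof -
  have "int (tx (cut_corner c T)) = int (tx T) - of_bool (c \<in> {W_corner, E_corner})"
    "int (ty (cut_corner c T)) = int (ty T) - of_bool (c \<in> {NW_corner, SE_corner})"
    "int (tz (cut_corner c T)) = int (tz T) - of_bool (c \<in> {NE_corner, SW_corner})"
    using assms(5) by (cases c; simp add: cut_corner_def of_nat_diff)+
  then show ?thesis
    using assms triad_fields_nonneg[of T]
    by (cases c; simp only: triad_arith_defs slack_def corner_cuttable.simps corner_simps; smt (z3))
qed

lemma ex_corner_cuttable: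
  assumes "triad_linear T" "0 \<le> NW_depth T" "0 \<le> NE_depth T" "0 \<le> S_depth T" "slack T \<noteq> 0"
  shows "\<exists>c. corner_cuttable c T"
proof -
  have "corner_cuttable W_corner T \<or> corner_cuttable E_corner T \<or> corner_cuttable NW_corner T \<or>
      corner_cuttable SE_corner T \<or> corner_cuttable NE_corner T \<or> corner_cuttable SW_corner T"
    using assms(2-5) sides_le_depth_sums[OF assms(1-4)] depths_sum[OF assms(1)]
      inner_lobes_le_focal_distance[OF assms(1)] triad_fields_nonneg[of T]
    unfolding slack_def corner_cuttable.simps by (smt (z3))
  then show ?thesis by blast
qed

lemma tileable_if_cut_corner_tileable:
  assumes "triad_linear T" "0 \<le> NW_depth T" "0 \<le> NE_depth T" "0 \<le> S_depth T"
    and cuttable: "corner_cuttable c T" and "tileable (triad_region (cut_corner c T))"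
  shows "tileable (triad_region T)"
proof (rule tileable_if_tileable_Diff)
  note facts = assms(1-5) triad_fields_nonneg[of T]
  note simps = Up_in_triad_region_iff Dn_in_triad_region_iff triad_arith_defs corner_cuttable.simps
    corner_simps
  let ?R = "triad_region T" and ?R' = "triad_region (cut_corner c T)"
  show "tileable ?R'" by fact
  show "?R' \<subseteq> ?R"
  proof
    fix t assume "t \<in> ?R'"
    then show "t \<in> ?R" using facts
      by (cases t; cases c; simp only: simps; smt (z3))
  qed
  show "tileable (?R - ?R')"
  proof (rule tileable_if_matching[where dir = "corner_dir c T"])
    show "\<And>i j. Up i j \<in> ?R - ?R' \<Longrightarrow> corner_dir c T i j = 0 \<or> corner_dir c T i j = 1 \<or> corner_dir c T i j = 2"
      by (cases c) simp_all
    show "\<And>i j. Up i j \<in> ?R - ?R' \<Longrightarrow> dn_neighbour (corner_dir c T i j) i j \<in> ?R - ?R'"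
      unfolding dn_neighbour_def Diff_iff if_distrib[of "\<lambda>x. x \<in> ?R"] if_distrib[of "\<lambda>x. x \<in> ?R'"]
      using facts by (cases c; simp only: simps; smt (z3))
    show "\<And>i j. \<not> ((Up i j \<in> ?R - ?R' \<and> corner_dir c T i j = 2) \<and>
        (Up (i+1) j \<in> ?R - ?R' \<and> corner_dir c T (i+1) j = 1))"
      unfolding Diff_iff using facts
      by (cases c; simp only: simps; smt (z3))
    show "\<And>i j. \<not> ((Up i j \<in> ?R - ?R' \<and> corner_dir c T i j = 2) \<and>
        (Up i (j+1) \<in> ?R - ?R' \<and> corner_dir c T i (j+1) = 0))"
      unfolding Diff_iff using facts
      by (cases c; simp only: simps; smt (z3))
    show "\<And>i j. \<not> ((Up (i+1) j \<in> ?R - ?R' \<and> corner_dir c T (i+1) j = 1) \<and>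
        (Up i (j+1) \<in> ?R - ?R' \<and> corner_dir c T i (j+1) = 0))"
      unfolding Diff_iff using facts
      by (cases c; simp only: simps; smt (z3))
    show "\<And>i j. Dn i j \<in> ?R - ?R' \<Longrightarrow>
        (Up i j \<in> ?R - ?R' \<and> corner_dir c T i j = 2) \<or>
        (Up (i+1) j \<in> ?R - ?R' \<and> corner_dir c T (i+1) j = 1) \<or>
        (Up i (j+1) \<in> ?R - ?R' \<and> corner_dir c T i (j+1) = 0)"
      unfolding Diff_iff using facts
      by (cases c; simp only: simps; smt (z3))
  qed
qed

(* The lozenge at Up i j in a tiling of a triad hexagon without slack, in coordinates
   u = i - tpA, v = j - tqA relative to A, where p, q, r are the NW-, NE- and S-depths: each
   clause is a parallelogram of lozenges of one direction; the rest are vertical (direction 0). *)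

definition balanced_dir ::
  "int \<Rightarrow> int \<Rightarrow> int \<Rightarrow> int \<Rightarrow> int \<Rightarrow> int \<Rightarrow> int \<Rightarrow> int \<Rightarrow> int \<Rightarrow> int \<Rightarrow> int \<Rightarrow> int \<Rightarrow> int" where
  "balanced_dir a b c a' b' c' p q r f u v = (
    if -(f+b+c+r) \<le> v \<and> v < -f-b \<and> 0 \<le> u+v+f+b \<and> u+v+f+b < p+q+a'+b' then 1 else
    if -f-b \<le> v \<and> v < -f \<and> 0 \<le> u \<and> u < f-r-c' then 2 else
    if -(f+b+c+r) \<le> v \<and> v < -f-c \<and> f+c-c' \<le> u \<and> u < f+c then 2 else
    if -f-c \<le> v \<and> v < -f \<and> -c' \<le> u+v \<and> u+v < 0 then 1 else
    if -f \<le> v \<and> v < -f+b'+p \<and> 0 \<le> u+v+f-b' \<and> u+v+f-b' < p+a'+q then 1 else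
    if -f+b'+p \<le> v \<and> v < 0 \<and> -p \<le> u \<and> u < 0 then 2 else
    if 0 \<le> v \<and> v < a \<and> -p \<le> u+v \<and> u+v < 0 then 1 else
    if -f+b'+p \<le> v \<and> v < -a' \<and> 0 \<le> u \<and> u < a'+q then 2 else
    if -a' \<le> v \<and> v < 0 \<and> 0 \<le> u+v \<and> u+v < q then 1 else
    if 0 \<le> v \<and> v < a \<and> 0 \<le> u \<and> u < q then 2 else
    if -f \<le> v \<and> v < -f+a+p \<and> 0 \<le> u+v+f+b \<and> u+v+f+b < b then 1 else
    if -f+a+p \<le> v \<and> v < a \<and> -(a+b+p) \<le> u \<and> u < -(a+p) then 2 else
    if -f \<le> v \<and> v < a+q-f \<and> f \<le> u \<and> u < f+c then 2 else
    if a+q-f \<le> v \<and> v < a \<and> 0 \<le> u+v-a-q \<and> u+v-a-q < c then 1 else 0)"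

lemma tileable_if_slack_zero:
  assumes "triad_linear T" "0 \<le> NW_depth T" "0 \<le> NE_depth T" "0 \<le> S_depth T"
    and "int (tx T) = NW_depth T + NE_depth T" "int (ty T) = NW_depth T + S_depth T"
    "int (tz T) = NE_depth T + S_depth T"
  shows "tileable (triad_region T)"
proof -
  note facts = assms triad_fields_nonneg[of T]
  note simps = Up_in_triad_region_iff Dn_in_triad_region_iff
  define dir where "dir i j = balanced_dir (int (ta T)) (int (tb T)) (int (tc T))
      (int (ta' T)) (int (tb' T)) (int (tc' T)) (NW_depth T) (NE_depth T) (S_depth T) (int (tf T))
      (i - tpA T) (j - tqA T)" for i j
  let ?R = "triad_region T"
  show ?thesis
  proof (rule tileable_if_matching[where dir = dir])
    show "\<And>i j. Up i j \<in> ?R \<Longrightarrow> dir i j = 0 \<or> dir i j = 1 \<or> dir i j = 2"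
      by (simp add: dir_def balanced_dir_def)
    show "\<And>i j. Up i j \<in> ?R \<Longrightarrow> dn_neighbour (dir i j) i j \<in> ?R"
      unfolding dir_def dn_neighbour_def using facts
      by (simp only: simps if_distrib[of "\<lambda>x. x \<in> ?R"];
          unfold triad_arith_defs balanced_dir_def; smt (z3))
    show "\<And>i j. \<not> ((Up i j \<in> ?R \<and> dir i j = 2) \<and> (Up (i+1) j \<in> ?R \<and> dir (i+1) j = 1))"
      unfolding dir_def using facts
      by (simp only: simps; unfold triad_arith_defs balanced_dir_def; smt (z3))
    show "\<And>i j. \<not> ((Up i j \<in> ?R \<and> dir i j = 2) \<and> (Up i (j+1) \<in> ?R \<and> dir i (j+1) = 0))"
      unfolding dir_def using facts
      by (simp only: simps; unfold triad_arith_defs balanced_dir_def; smt (z3))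
    show "\<And>i j. \<not> ((Up (i+1) j \<in> ?R \<and> dir (i+1) j = 1) \<and> (Up i (j+1) \<in> ?R \<and> dir i (j+1) = 0))"
      unfolding dir_def using facts
      by (simp only: simps; unfold triad_arith_defs balanced_dir_def; smt (z3))
    show "\<And>i j. Dn i j \<in> ?R \<Longrightarrow>
        (Up i j \<in> ?R \<and> dir i j = 2) \<or> (Up (i+1) j \<in> ?R \<and> dir (i+1) j = 1) \<or>
        (Up i (j+1) \<in> ?R \<and> dir i (j+1) = 0)"
      unfolding dir_def using facts
      by (simp only: simps; unfold triad_arith_defs balanced_dir_def; smt (z3))
  qed
qed

lemma tileable_if_depths_nonneg:
  assumes "triad_linear T" "0 \<le> NW_depth T" "0 \<le> NE_depth T" "0 \<le> S_depth T"
  shows "tileable (triad_region T)"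
  using assms
proof (induction "nat (slack T)" arbitrary: T rule: less_induct)
  case less
  note sides = sides_le_depth_sums[OF less.prems]
  show ?case
  proof (cases "slack T = 0")
    case True
    then have "int (tx T) = NW_depth T + NE_depth T" "int (ty T) = NW_depth T + S_depth T"
      "int (tz T) = NE_depth T + S_depth T"
      using sides unfolding slack_def by linarith+
    then show ?thesis using tileable_if_slack_zero less.prems by blast
  next
    case False
    then obtain c where c: "corner_cuttable c T" using ex_corner_cuttable less.prems by blast
    note cut = cut_corner_linear[OF less.prems c]
    then have "0 \<le> slack (cut_corner c T)"
      using sides_le_depth_sums[of "cut_corner c T"] unfolding slack_def by linarith
    then have "nat (slack (cut_corner c T)) < nat (slack T)" using cut by (simp add: nat_less_eq_zless)
    then have "tileable (triad_region (cut_corner c T))" using less.hyps cut by blast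
    then show ?thesis using tileable_if_cut_corner_tileable less.prems c by blast
  qed
qed

section \<open>Tileability and bowtie squeezing\<close>

lemma tileable_triad_region_iff:
  assumes "is_triad T"
  shows "tileable (triad_region T) \<longleftrightarrow> 0 \<le> S_depth T \<and> 0 \<le> NE_depth T \<and> 0 \<le> NW_depth T"
  using assms unfolding is_triad_iff_linear
  by (metis S_depth_nonneg_if_tileable NE_depth_nonneg_if_tileable NW_depth_nonneg_if_tileable
      tileable_if_depths_nonneg)

lemma depths_squeeze_out_A:
  assumes "d \<le> tf T"
  shows "S_depth (squeeze_out_A d T) = S_depth T \<and> NE_depth (squeeze_out_A d T) = NE_depth T \<and>
    NW_depth (squeeze_out_A d T) = NW_depth T"
  using assms by (simp add: squeeze_out_A_def S_depth_def NE_depth_def NW_depth_def ptA_def ptB_def of_nat_diff)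

lemma depths_squeeze_out_B:
  assumes "d \<le> tf T"
  shows "S_depth (squeeze_out_B d T) = S_depth T \<and> NE_depth (squeeze_out_B d T) = NE_depth T \<and>
    NW_depth (squeeze_out_B d T) = NW_depth T"
  using assms by (simp add: squeeze_out_B_def S_depth_def NE_depth_def NW_depth_def ptA_def ptB_def of_nat_diff)

lemma depths_squeeze_out_C:
  assumes "d \<le> tf T"
  shows "S_depth (squeeze_out_C d T) = S_depth T \<and> NE_depth (squeeze_out_C d T) = NE_depth T \<and>
    NW_depth (squeeze_out_C d T) = NW_depth T"
  using assms by (simp add: squeeze_out_C_def S_depth_def NE_depth_def NW_depth_def ptA_def ptB_def of_nat_diff)

lemma squeeze_step_depths:
  assumes "squeeze_step T T'"
  shows "S_depth T' = S_depth T \<and> NE_depth T' = NE_depth T \<and> NW_depth T' = NW_depth T"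
proof -
  have inner_le: "ta' U \<le> tf U \<and> tb' U \<le> tf U \<and> tc' U \<le> tf U" if "is_triad U" for U
    using that by (auto simp: is_triad_def)
  from assms obtain d where "is_triad T" "is_triad T'"
    "(d \<le> ta' T \<and> T' = squeeze_out_A d T) \<or> (d \<le> tb' T \<and> T' = squeeze_out_B d T) \<or>
     (d \<le> tc' T \<and> T' = squeeze_out_C d T) \<or> (d \<le> ta' T' \<and> T = squeeze_out_A d T') \<or>
     (d \<le> tb' T' \<and> T = squeeze_out_B d T') \<or> (d \<le> tc' T' \<and> T = squeeze_out_C d T')"
    unfolding squeeze_step_def by blast
  then show ?thesis
    using inner_le[of T] inner_le[of T']
      depths_squeeze_out_A[of d T] depths_squeeze_out_B[of d T] depths_squeeze_out_C[of d T]
      depths_squeeze_out_A[of d T'] depths_squeeze_out_B[of d T'] depths_squeeze_out_C[of d T']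
    by (elim disjE) auto
qed

lemma tileable_if_squeeze_steps:
  assumes "squeeze_step\<^sup>*\<^sup>* T T'" "is_triad T" "tileable (triad_region T)"
  shows "tileable (triad_region T')"
  using assms
proof (induction rule: rtranclp_induct)
  case (step U U')
  then have "is_triad U" "is_triad U'" by (simp_all add: squeeze_step_def)
  with step show ?case using squeeze_step_depths tileable_triad_region_iff by metis
qed

theorem lemma2p1:
  shows "(\<forall>T. is_triad T \<longrightarrow>
            (tileable (triad_region T) \<longleftrightarrow>
               0 \<le> S_depth T \<and> 0 \<le> NE_depth T \<and> 0 \<le> NW_depth T))
       \<and> (\<forall>T T'. squeeze_step T T' \<longrightarrow>
            S_depth T' = S_depth T \<and> NE_depth T' = NE_depth T \<and> NW_depth T' = NW_depth T)
       \<and> (\<forall>T T'. is_triad T \<longrightarrow> tileable (triad_region T) \<longrightarrow> squeeze_step\<^sup>*\<^sup>* T T'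
            \<longrightarrow> tileable (triad_region T'))"
  using tileable_triad_region_iff squeeze_step_depths tileable_if_squeeze_steps by blast

end
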